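(* Let $\gamma\ge0$, $\sigma_0>0$, let $S$ be the real zero-mean Gaussian generalized random field solving $(-\Delta)^{\gamma/2}S=W$ with $W$ Gaussian white noise on $\mathbb{R}^2$ of variance $\sigma_0^2$, let $J\in L_2(\mathbb{R}^2)$ be real-valued, $\theta^*\in[0,2\pi)$, and $I(\mathbf{x})=J(\mathbf{R}_{-\theta^*}\mathbf{x})+S(\mathbf{x})$. Let $\hat h$ be a real-valued radial profile with $\hat h(\omega)=0$ for $\omega\notin(\pi/4,\pi]$, and for $n,i\in\mathbb{Z}$ define the circular harmonic wavelets $\xi_{n,i}$ by $\hat\xi_{n,i}(\omega,\varphi)=2^i\hat h(2^i\omega)\mathrm{e}^{\mathrm{j}n\varphi}$, with measurements $q_{n,i}=\langle I,\xi_{n,i}\rangle$ and rescaled measurements $\tilde q_{n,i}=2^{-i\gamma}q_{n,i}$. Set $$b_z=\frac{1}{2\pi}\int_0^\infty\omega^z\hat h(\omega)^2\,\omega\,\mathrm{d}\omega,\quad d_z=\frac{1}{2\pi}\int_0^\infty\omega^z\hat h(\omega)\hat h(2\omega)\,\omega\,\mathrm{d}\omega,\quad B=\sigma_0^2b_{-2\gamma},\quad D=\sigma_0^2\,2^{1-\gamma}d_{-2\gamma}.$$ Then the covariance matrix $\mathbf{C}[(n,i),(m,k)]=\mathbb{E}\big[(\tilde q_{n,i}-\mathbb{E}\tilde q_{n,i})\overline{(\tilde q_{m,k}-\mathbb{E}\tilde q_{m,k})}\big]$ of $(\tilde q_{n,i})_{n,i\in\mathbb{Z}}$ is $$\mathbf{C}[(n,i),(m,k)]=\begin{cases}B,&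 m=n,\ k=i,\\ D,& m=n,\ |k-i|=1,\\ 0,&\text{otherwise.}\end{cases}$$
   Context: Fourier transform $\hat f(\boldsymbol\omega)=\int f(\mathbf{x})\mathrm{e}^{-\mathrm{j}\langle\mathbf{x},\boldsymbol\omega\rangle}\mathrm{d}\mathbf{x}$, polar coordinates $(\omega,\varphi)$ in frequency; $\mathbf{R}_{\theta_0}$ is rotation by $\theta_0$; $\langle f,g\rangle=\int_{\mathbb{R}^2}fg$. For suitable test functions $f,g$ the noise satisfies $\mathbb{E}[\langle S,f\rangle\overline{\langle S,g\rangle}]=\frac{\sigma_0^2}{(2\pi)^2}\int_0^\infty\int_0^{2\pi}\omega^{-2\gamma}\hat f(\omega,\varphi)\overline{\hat g(\omega,\varphi)}\,\mathrm{d}\varphi\,\omega\,\mathrm{d}\omega$; the integrals defining the covariances are assumed finite. *)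

theory Defs
  imports "HOL-Probability.Probability"
begin

definition fourier2 :: "(real^2 \<Rightarrow> complex) \<Rightarrow> real^2 \<Rightarrow> complex" where
  "fourier2 f w = (LINT x|lborel. f x * exp (- \<i> * complex_of_real (x \<bullet> w)))"

definition polar2 :: "real \<Rightarrow> real \<Rightarrow> real^2" where
  "polar2 r \<phi> = vector [r * cos \<phi>, r * sin \<phi>]"

definition rot2 :: "real \<Rightarrow> real^2 \<Rightarrow> real^2" where
  "rot2 \<theta> x = vector [cos \<theta> * x$1 - sin \<theta> * x$2, sin \<theta> * x$1 + cos \<theta> * x$2]"

definition pair2 :: "(real^2 \<Rightarrow> complex) \<Rightarrow> (real^2 \<Rightarrow> complex) \<Rightarrow> complex" where
  "pair2 f g = (LINT x|lborel. f x * g x)"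

definition bconst :: "(real \<Rightarrow> real) \<Rightarrow> real \<Rightarrow> real" where
  "bconst h z = 1 / (2*pi) * (LINT w:{0<..}|lborel. w powr z * (h w)^2 * w)"

definition dconst :: "(real \<Rightarrow> real) \<Rightarrow> real \<Rightarrow> real" where
  "dconst h z = 1 / (2*pi) * (LINT w:{0<..}|lborel. w powr z * h w * h (2*w) * w)"

definition noise_cov :: "real \<Rightarrow> real \<Rightarrow> (real^2 \<Rightarrow> complex) \<Rightarrow> (real^2 \<Rightarrow> complex) \<Rightarrow> complex" where
  "noise_cov \<sigma>0 \<gamma> f g = complex_of_real (\<sigma>0^2 / (2*pi)^2) *
     (LINT r:{0<..}|lborel.
        (LINT \<phi>:{0..2*pi}|lborel. complex_of_real (r powr (-2*\<gamma>)) *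
            fourier2 f (polar2 r \<phi>) * cnj (fourier2 g (polar2 r \<phi>))) * complex_of_real r)"

end

theory Submission
  imports Defs
begin

text \<open>The deterministic part J only shifts the mean, so the centred rescaled measurements are
  2^(-i\<gamma>) S \<xi>_{n,i} and their covariance is given by the noise formula. In polar coordinates
  the angular integral of exp(j(n-m)\<phi>) vanishes unless m = n. The radial integral of
  \<omega>^(-2\<gamma>) h(2^i \<omega>) h(2^k \<omega>) becomes, after the substitution w = 2^i \<omega>, a multiple of
  b or d when |k - i| \<le> 1, and vanishes for |k - i| \<ge> 2 because h is supported in an interval
  (a, 4a], so dilates of it by factors at least 4 have disjoint supports.\<close>

lemma integral_iexp_int_0_2pi:
  fixes k :: int
  shows "(LINT \<phi>:{0..2*pi}|lborel. exp (\<i> * complex_of_real (real_of_int k * \<phi>)))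
    = (if k = 0 then complex_of_real (2*pi) else 0)"
proof (cases "k = 0")
  case True
  then show ?thesis by (simp add: set_integral_const scaleR_conv_of_real)
next
  case False
  define F where "F x = (- \<i> / of_int k) * exp (\<i> * complex_of_real (real_of_int k * x))" for x
  have "(LBINT x=ereal 0..ereal (2*pi). exp (\<i> * complex_of_real (real_of_int k * x))) = F (2*pi) - F 0"
  proof (rule interval_integral_FTC_finite)
    show "continuous_on {min 0 (2*pi)..max 0 (2*pi)} (\<lambda>x. exp (\<i> * complex_of_real (real_of_int k * x)))"
      by (intro continuous_intros)
    fix x :: real
    have "((\<lambda>x. iexp (real_of_int k * x)) has_vector_derivative \<i> * iexp (real_of_int k * x) * of_int k)
        (at x within {min 0 (2*pi)..max 0 (2*pi)})"
      by (auto intro!: derivative_eq_intros simp: Re_exp Im_exp has_vector_derivative_complex_iff)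
    then have "(F has_vector_derivative (- \<i> / of_int k) * (\<i> * iexp (real_of_int k * x) * of_int k))
        (at x within {min 0 (2*pi)..max 0 (2*pi)})"
      unfolding F_def by (rule has_vector_derivative_mult_right)
    moreover have "(- \<i> / of_int k) * (\<i> * iexp (real_of_int k * x) * of_int k) = iexp (real_of_int k * x)"
      using False by (simp add: field_simps)
    ultimately show "(F has_vector_derivative exp (\<i> * complex_of_real (real_of_int k * x)))
        (at x within {min 0 (2*pi)..max 0 (2*pi)})"
      by simp
  qed
  moreover have "F (2*pi) = F 0"
  proof -
    have "\<i> * complex_of_real (real_of_int k * (2*pi)) = (2*pi*\<i>) * of_int k"
      by (simp add: algebra_simps)
    then show ?thesis
      using exp_integer_2pi[of "of_int k"] by (simp add: F_def mult_ac)
  qed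
  moreover have "(LBINT x=ereal 0..ereal (2*pi). exp (\<i> * complex_of_real (real_of_int k * x)))
      = (LINT \<phi>:{0..2*pi}|lborel. exp (\<i> * complex_of_real (real_of_int k * \<phi>)))"
    by (rule interval_integral_Icc) simp
  ultimately show ?thesis using False by simp
qed

lemma set_integral_Ioi_dilation:
  fixes F :: "real \<Rightarrow> real"
  assumes c: "c > 0"
  shows "(LINT w:{0<..}|lborel. F w) = c * (LINT x:{0<..}|lborel. F (c*x))"
proof -
  have "(LINT w:{0<..}|lborel. F w) = (\<integral>w. indicator {0<..} w *\<^sub>R F w \<partial>lborel)"
    by (simp add: set_lebesgue_integral_def)
  also have "\<dots> = \<bar>c\<bar> *\<^sub>R (\<integral>x. indicator {0<..} (0 + c*x) *\<^sub>R F (0 + c*x) \<partial>lborel)"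
    using c by (intro lborel_integral_real_affine) simp
  also have "(\<lambda>x. indicator {0<..} (0 + c*x) *\<^sub>R F (0 + c*x)) = (\<lambda>x. indicator {0<..} x *\<^sub>R F (c*x))"
    using c by (auto simp: indicator_def zero_less_mult_iff)
  finally show ?thesis using c by (simp add: set_lebesgue_integral_def)
qed

lemma radial_integral_dilation:
  fixes u v :: "real \<Rightarrow> real"
  assumes c: "c > 0"
  shows "(LINT r:{0<..}|lborel. r powr p * (c * u (c*r)) * (c * v (c*r)) * r)
    = c powr (-p) * (LINT w:{0<..}|lborel. w powr p * u w * v w * w)"
proof -
  have pointwise: "r powr p * (c * u (c*r)) * (c * v (c*r)) * r
      = c * (c powr (-p) * ((c*r) powr p * u (c*r) * v (c*r) * (c*r)))" if "r > 0" for r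
    using c that by (simp add: powr_mult powr_minus field_simps)
  have "(LINT r:{0<..}|lborel. r powr p * (c * u (c*r)) * (c * v (c*r)) * r)
      = c * (c powr (-p) * (LINT r:{0<..}|lborel. (c*r) powr p * u (c*r) * v (c*r) * (c*r)))"
    by (subst set_integral_mult_right[symmetric], subst set_integral_mult_right[symmetric])
      (rule set_lebesgue_integral_cong, auto simp: pointwise)
  also have "\<dots> = c powr (-p) * (LINT w:{0<..}|lborel. w powr p * u w * v w * w)"
    using set_integral_Ioi_dilation[OF c, of "\<lambda>w. w powr p * u w * v w * w"] by simp
  finally show ?thesis .
qed

lemma dilates_disjoint_support:
  fixes h :: "real \<Rightarrow> real" and i k :: int
  assumes supp: "\<And>w. w \<notin> {a<..4*a} \<Longrightarrow> h w = 0"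
    and ik: "k \<ge> i + 2" and r: "r > 0"
  shows "h (2 powr i * r) * h (2 powr k * r) = 0"
proof (rule ccontr)
  assume "h (2 powr i * r) * h (2 powr k * r) \<noteq> 0"
  then have lower: "a < 2 powr i * r" and upper: "2 powr k * r \<le> 4*a"
    using supp by fastforce+
  have "4 = 2 powr (2::real)" by simp
  also have "\<dots> \<le> 2 powr (real_of_int (k - i))"
    using ik by (intro powr_mono) auto
  finally have "4 * (2 powr i * r) \<le> 2 powr (real_of_int (k - i)) * 2 powr i * r"
    using r by (simp add: mult_right_mono)
  also have "\<dots> = 2 powr k * r"
    by (simp flip: powr_add)
  finally show False using lower upper by simp
qed

lemma noise_cov_circular_harmonics:
  fixes u v :: "real \<Rightarrow> real" and n m :: int
  assumes f_hat: "\<And>r \<phi>. r \<ge> 0 \<Longrightarrow> fourier2 f (polar2 r \<phi>)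
      = complex_of_real (u r) * exp (\<i> * complex_of_real (real_of_int n * \<phi>))"
    and g_hat: "\<And>r \<phi>. r \<ge> 0 \<Longrightarrow> fourier2 g (polar2 r \<phi>)
      = complex_of_real (v r) * exp (\<i> * complex_of_real (real_of_int m * \<phi>))"
  shows "noise_cov \<sigma>0 \<gamma> f g = (if n = m
    then complex_of_real (\<sigma>0^2 / (2*pi) * (LINT r:{0<..}|lborel. r powr (-2*\<gamma>) * u r * v r * r))
    else 0)"
proof -
  define G where "G = (\<lambda>r. r powr (-2*\<gamma>) * u r * v r * r)"
  have angular: "(LINT \<phi>:{0..2*pi}|lborel. complex_of_real (r powr (-2*\<gamma>)) *
        fourier2 f (polar2 r \<phi>) * cnj (fourier2 g (polar2 r \<phi>))) * complex_of_real r
      = complex_of_real (G r) * (if n = m then complex_of_real (2*pi) else 0)" if "r > 0" for r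
  proof -
    have pointwise: "complex_of_real (r powr (-2*\<gamma>)) * fourier2 f (polar2 r \<phi>) * cnj (fourier2 g (polar2 r \<phi>))
        = complex_of_real (r powr (-2*\<gamma>) * u r * v r) * exp (\<i> * complex_of_real (real_of_int (n - m) * \<phi>))"
      for \<phi>
      using that by (simp add: f_hat g_hat exp_cnj mult_ac flip: exp_add) (simp add: algebra_simps)
    have "(LINT \<phi>:{0..2*pi}|lborel. complex_of_real (r powr (-2*\<gamma>)) *
        fourier2 f (polar2 r \<phi>) * cnj (fourier2 g (polar2 r \<phi>)))
      = complex_of_real (r powr (-2*\<gamma>) * u r * v r) * (if n - m = 0 then complex_of_real (2*pi) else 0)"
      by (simp only: pointwise set_integral_mult_right integral_iexp_int_0_2pi)
    then show ?thesis by (simp add: G_def)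
  qed
  have "noise_cov \<sigma>0 \<gamma> f g = complex_of_real (\<sigma>0^2 / (2*pi)^2) *
      (LINT r:{0<..}|lborel. complex_of_real (G r) * (if n = m then complex_of_real (2*pi) else 0))"
    unfolding noise_cov_def
    by (rule arg_cong[where f = "\<lambda>z. complex_of_real (\<sigma>0^2 / (2*pi)^2) * z"],
        rule set_lebesgue_integral_cong, simp, intro allI impI, rule angular, simp)
  also have "(LINT r:{0<..}|lborel. complex_of_real (G r) * (if n = m then complex_of_real (2*pi) else 0))
      = (if n = m then complex_of_real ((LINT r:{0<..}|lborel. G r) * (2*pi)) else 0)"
    by (simp only: if_distrib[of "\<lambda>z. _ * z"] flip: of_real_mult)
      (simp add: set_integral_complex_of_real)
  finally show ?thesis
    by (simp only: G_def if_distrib[of "\<lambda>z. _ * z"] flip: of_real_mult) (simp add: field_simps power2_eq_square)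
qed

lemma dyadic_radial_cov:
  fixes h :: "real \<Rightarrow> real" and i k :: int
  assumes h_supp: "\<And>w. w \<notin> {pi/4<..pi} \<Longrightarrow> h w = 0"
  shows "2 powr (- real_of_int i * \<gamma>) * 2 powr (- real_of_int k * \<gamma>) * (1 / (2*pi) *
      (LINT r:{0<..}|lborel. r powr (-2*\<gamma>) * (2 powr i * h (2 powr i * r)) * (2 powr k * h (2 powr k * r)) * r))
    = (if k = i then bconst h (-2*\<gamma>)
       else if \<bar>k - i\<bar> = 1 then 2 powr (1 - \<gamma>) * dconst h (-2*\<gamma>)
       else 0)"
proof -
  define c where "c j = 2 powr (- real_of_int j * \<gamma>)" for j :: int
  define R where "R i k = (LINT r:{0<..}|lborel.
    r powr (-2*\<gamma>) * (2 powr i * h (2 powr i * r)) * (2 powr k * h (2 powr k * r)) * r)" for i k :: int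
  have R_sym: "R i k = R k i" for i k
    unfolding R_def by (simp add: mult_ac)
  have R_diag: "1 / (2*pi) * R j j = 2 powr (2 * real_of_int j * \<gamma>) * bconst h (-2*\<gamma>)" for j
    using radial_integral_dilation[where c = "2 powr j" and p = "-2*\<gamma>" and u = h and v = h]
    by (simp add: R_def bconst_def powr_powr power2_eq_square mult_ac)
  have R_adj: "1 / (2*pi) * R j (j+1) = 2 powr (2 * real_of_int j * \<gamma> + 1) * dconst h (-2*\<gamma>)" for j
  proof -
    \<comment> \<open>the finer wavelet is the dilate by 2^j of w \<mapsto> 2 h(2w)\<close>
    have "2 powr real_of_int (j+1) * h (2 powr real_of_int (j+1) * r) = 2 powr j * (2 * h (2 * (2 powr j * r)))" for r
      by (simp add: powr_add mult_ac)
    then have "R j (j+1) = (LINT r:{0<..}|lborel.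
        r powr (-2*\<gamma>) * (2 powr j * h (2 powr j * r)) * (2 powr j * (2 * h (2 * (2 powr j * r)))) * r)"
      by (simp add: R_def)
    also have "\<dots> = (2 powr j) powr (2*\<gamma>) * (LINT w:{0<..}|lborel. w powr (-2*\<gamma>) * h w * (2 * h (2*w)) * w)"
      by (subst radial_integral_dilation) simp_all
    also have "(LINT w:{0<..}|lborel. w powr (-2*\<gamma>) * h w * (2 * h (2*w)) * w)
        = 2 * (LINT w:{0<..}|lborel. w powr (-2*\<gamma>) * h w * h (2*w) * w)"
      by (simp add: mult_ac flip: set_integral_mult_right)
    finally show ?thesis
      by (simp add: dconst_def powr_powr powr_add mult_ac)
  qed
  have R_far: "R i k = 0" if "k \<ge> i + 2" for i k
  proof -
    have "h (2 powr i * r) * h (2 powr k * r) = 0" if "r > 0" for r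
      using dilates_disjoint_support[where a = "pi/4" and h = h] h_supp \<open>k \<ge> i + 2\<close> \<open>r > 0\<close> by simp
    then show ?thesis
      unfolding R_def by (subst set_lebesgue_integral_cong[where g = "\<lambda>_. 0"]) (auto simp: mult_ac)
  qed
  have diag_scale: "c j * c j * 2 powr (2 * real_of_int j * \<gamma>) = 1" for j
    unfolding c_def by (simp flip: powr_add)
  have adj: "c j * c (j+1) * (1 / (2*pi) * R j (j+1)) = 2 powr (1 - \<gamma>) * dconst h (-2*\<gamma>)" for j
  proof -
    have "c j * c (j+1) * 2 powr (2 * real_of_int j * \<gamma> + 1) = 2 powr (1 - \<gamma>)"
      unfolding c_def by (simp flip: powr_add) (simp add: algebra_simps)
    then show ?thesis by (simp only: R_adj mult.assoc[symmetric])
  qed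
  consider "k = i" | "k = i + 1" | "i = k + 1" | "k \<ge> i + 2 \<or> i \<ge> k + 2"
    by linarith
  then have "c i * c k * (1 / (2*pi) * R i k)
    = (if k = i then bconst h (-2*\<gamma>)
       else if \<bar>k - i\<bar> = 1 then 2 powr (1 - \<gamma>) * dconst h (-2*\<gamma>)
       else 0)"
  proof cases
    case 1
    then show ?thesis by (simp only: R_diag mult.assoc[symmetric] diag_scale) simp
  next
    case 2
    then show ?thesis using adj[of i] by simp
  next
    case 3
    have "R i k = R k (k+1)" using 3 R_sym[of k "k+1"] by simp
    moreover have "c i * c k = c k * c (k+1)" using 3 by (simp add: mult.commute)
    ultimately have "c i * c k * (1 / (2*pi) * R i k) = c k * c (k+1) * (1 / (2*pi) * R k (k+1))"
      by simp
    also have "\<dots> = 2 powr (1 - \<gamma>) * dconst h (-2*\<gamma>)"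
      by (rule adj)
    finally show ?thesis using 3 by simp
  next
    case 4
    then have "R i k = 0" using R_far[of i k] R_far[of k i] R_sym[of i k] by auto
    moreover have "k \<noteq> i" "\<bar>k - i\<bar> \<noteq> 1" using 4 by arith+
    ultimately show ?thesis by simp
  qed
  then show ?thesis by (simp only: c_def R_def)
qed

lemma (in prob_space) covariance_affine_shift:
  fixes Z W :: "'a \<Rightarrow> complex"
  assumes Z: "integrable M Z" "expectation Z = 0"
    and W: "integrable M W" "expectation W = 0"
  shows "expectation (\<lambda>x. (c * (a + Z x) - expectation (\<lambda>x. c * (a + Z x))) *
      cnj (d * (b + W x) - expectation (\<lambda>x. d * (b + W x))))
    = c * cnj d * expectation (\<lambda>x. Z x * cnj (W x))"
proof -
  have "expectation (\<lambda>x. c * (a + Z x)) = c * a" "expectation (\<lambda>x. d * (b + W x)) = d * b"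
    using Z W by (simp_all add: Bochner_Integration.integral_add prob_space)
  then have "(\<lambda>x. (c * (a + Z x) - expectation (\<lambda>x. c * (a + Z x))) *
      cnj (d * (b + W x) - expectation (\<lambda>x. d * (b + W x))))
    = (\<lambda>x. c * cnj d * (Z x * cnj (W x)))"
    by (simp add: fun_eq_iff algebra_simps)
  then show ?thesis by simp
qed

theorem proposition3:
  fixes M :: "'a measure"
    and S :: "(real^2 \<Rightarrow> complex) \<Rightarrow> 'a \<Rightarrow> complex"
    and T :: "(real^2 \<Rightarrow> complex) set"
    and J :: "real^2 \<Rightarrow> real"
    and h :: "real \<Rightarrow> real"
    and \<xi> :: "int \<Rightarrow> int \<Rightarrow> real^2 \<Rightarrow> complex"
    and \<gamma> \<sigma>0 \<theta> :: real
  assumes gamma: "\<gamma> \<ge> 0" and sigma: "\<sigma>0 > 0"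
    and theta: "\<theta> \<in> {0..<2*pi}"
    and J_L2: "J \<in> borel_measurable lborel" "integrable lborel (\<lambda>x. (J x)^2)"
    and M: "prob_space M"
    and S_meas: "\<And>f. f \<in> T \<Longrightarrow> S f \<in> borel_measurable M"
    and S_sq: "\<And>f. f \<in> T \<Longrightarrow> integrable M (\<lambda>x. (cmod (S f x))^2)"
    and S_mean: "\<And>f. f \<in> T \<Longrightarrow> prob_space.expectation M (S f) = 0"
    and S_cov: "\<And>f g. f \<in> T \<Longrightarrow> g \<in> T \<Longrightarrow>
                   prob_space.expectation M (\<lambda>x. S f x * cnj (S g x)) = noise_cov \<sigma>0 \<gamma> f g"
    and h_meas: "h \<in> borel_measurable lborel"
    and h_supp: "\<And>w. w \<notin> {pi/4<..pi} \<Longrightarrow> h w = 0"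
    and h_fin: "set_integrable lborel {0<..} (\<lambda>w. w powr (-2*\<gamma>) * (h w)^2 * w)"
    and xi_hat: "\<And>n i r \<phi>. r \<ge> 0 \<Longrightarrow> fourier2 (\<xi> n i) (polar2 r \<phi>) =
                   complex_of_real (2 powr (real_of_int i) * h (2 powr (real_of_int i) * r))
                   * exp (\<i> * complex_of_real (real_of_int n * \<phi>))"
    and xi_T: "\<And>n i. \<xi> n i \<in> T"
  defines "qt \<equiv> \<lambda>n i x. complex_of_real (2 powr (- real_of_int i * \<gamma>)) *
              (pair2 (\<lambda>y. complex_of_real (J (rot2 (-\<theta>) y))) (\<xi> n i) + S (\<xi> n i) x)"
    and "B \<equiv> \<sigma>0^2 * bconst h (-2*\<gamma>)"
    and "D \<equiv> \<sigma>0^2 * 2 powr (1 - \<gamma>) * dconst h (-2*\<gamma>)"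
  shows "\<forall>n i m k.
     prob_space.expectation M (\<lambda>x.
        (qt n i x - prob_space.expectation M (qt n i)) *
        cnj (qt m k x - prob_space.expectation M (qt m k)))
     = (if m = n \<and> k = i then complex_of_real B
        else if m = n \<and> \<bar>k - i\<bar> = 1 then complex_of_real D
        else 0)"
proof (intro allI)
  fix n i m k :: int
  interpret prob_space M by (rule M)
  define c where "c j = 2 powr (- real_of_int j * \<gamma>)" for j :: int
  define I where "I = (LINT r:{0<..}|lborel.
    r powr (-2*\<gamma>) * (2 powr i * h (2 powr i * r)) * (2 powr k * h (2 powr k * r)) * r)"
  have S_integrable: "integrable M (S (\<xi> n i))" for n i
  proof -
    have "integrable M (\<lambda>x. cmod (S (\<xi> n i) x))"
      using measurable_compose[OF S_meas[OF xi_T] borel_measurable_norm] S_sq[OF xi_T]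
      by (rule square_integrable_imp_integrable)
    then show ?thesis using S_meas[OF xi_T] integrable_norm_iff by blast
  qed
  have radial: "c i * c k * (1 / (2*pi) * I)
      = (if k = i then bconst h (-2*\<gamma>)
         else if \<bar>k - i\<bar> = 1 then 2 powr (1 - \<gamma>) * dconst h (-2*\<gamma>)
         else 0)"
    unfolding c_def I_def by (rule dyadic_radial_cov[OF h_supp])
  have "expectation (\<lambda>x. (qt n i x - expectation (qt n i)) * cnj (qt m k x - expectation (qt m k)))
      = complex_of_real (c i * c k) * noise_cov \<sigma>0 \<gamma> (\<xi> n i) (\<xi> m k)"
    unfolding qt_def
    by (simp only: covariance_affine_shift[OF S_integrable S_mean[OF xi_T] S_integrable S_mean[OF xi_T]]
        S_cov[OF xi_T xi_T] complex_cnj_complex_of_real of_real_mult c_def)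
  also have "noise_cov \<sigma>0 \<gamma> (\<xi> n i) (\<xi> m k) = (if n = m then complex_of_real (\<sigma>0^2 / (2*pi) * I) else 0)"
    unfolding I_def
    by (rule noise_cov_circular_harmonics[where u = "\<lambda>r. 2 powr i * h (2 powr i * r)"
          and v = "\<lambda>r. 2 powr k * h (2 powr k * r)"]) (simp_all add: xi_hat)
  also have "complex_of_real (c i * c k) * (if n = m then complex_of_real (\<sigma>0^2 / (2*pi) * I) else 0)
      = (if m = n then complex_of_real (\<sigma>0^2 * (c i * c k * (1 / (2*pi) * I))) else 0)"
    by (simp flip: of_real_mult)
  also have "\<dots> = (if m = n \<and> k = i then complex_of_real B
        else if m = n \<and> \<bar>k - i\<bar> = 1 then complex_of_real D
        else 0)"
    unfolding radial by (simp add: B_def D_def)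
  finally show "expectation (\<lambda>x. (qt n i x - expectation (qt n i)) * cnj (qt m k x - expectation (qt m k)))
     = (if m = n \<and> k = i then complex_of_real B
        else if m = n \<and> \<bar>k - i\<bar> = 1 then complex_of_real D
        else 0)" .
qed

end
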